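(* For all $\alpha,\beta\in\mathbb{R}$, \[ \|R_x(\alpha)R_y(\beta)-\mathrm{Id}\|\le\sqrt{\alpha^2+\beta^2}, \] with equality only for $\alpha=\beta=0$.
   Context: $R_x(\alpha)=\begin{pmatrix}1&0&0\\0&\cos\alpha&-\sin\alpha\\0&\sin\alpha&\cos\alpha\end{pmatrix}$, $R_y(\alpha)=\begin{pmatrix}\cos\alpha&0&-\sin\alpha\\0&1&0\\ \sin\alpha&0&\cos\alpha\end{pmatrix}$. $\|\cdot\|$ denotes the operator norm induced by the Euclidean norm. *)

theory Defs
  imports "HOL-Analysis.Analysis"
begin

definition Rx :: "real \<Rightarrow> real^3^3" where
  "Rx a = vector [vector [1, 0, 0],
                  vector [0, cos a, - sin a],
                  vector [0, sin a, cos a]]"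

definition Ry :: "real \<Rightarrow> real^3^3" where
  "Ry a = vector [vector [cos a, 0, - sin a],
                  vector [0, 1, 0],
                  vector [sin a, 0, cos a]]"

definition opnorm :: "real^3^3 \<Rightarrow> real" where
  "opnorm M = onorm (\<lambda>v. M *v v)"

end

theory Submission
  imports Defs
begin

text \<open>Put \<open>M = Rx \<alpha> ** Ry \<beta>\<close> and \<open>K = 3 - cos \<alpha> - cos \<beta> - cos \<alpha> * cos \<beta> = 3 - trace M\<close>.
  In half-angle coordinates one finds \<open>\<parallel>(M - 1) v\<parallel>\<^sup>2 = K \<parallel>v\<parallel>\<^sup>2 - w\<^sup>2\<close> for a real \<open>w\<close> depending
  on \<open>v\<close>, so \<open>\<parallel>M - 1\<parallel> \<le> sqrt K\<close>. Moreover
  \<open>K = 2 (1 - cos \<alpha>) + 2 (1 - cos \<beta>) - (1 - cos \<alpha>) (1 - cos \<beta>) \<le> 2 (1 - cos \<alpha>) + 2 (1 - cos \<beta>)\<close>,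
  and \<open>1 - cos x = 2 sin\<^sup>2 (x/2) \<le> x\<^sup>2/2\<close>, strictly unless \<open>x = 0\<close>.\<close>

lemma abs_sin_less_abs:
  fixes x :: real
  assumes "x \<noteq> 0"
  shows "\<bar>sin x\<bar> < \<bar>x\<bar>"
proof (cases "sin (x/2) = 0")
  case True
  then show ?thesis using assms sin_double[of "x/2"] by simp
next
  case False
  then have "(cos (x/2))\<^sup>2 < 1"
    using sin_cos_squared_add[of "x/2"] by (smt (verit) zero_less_power2)
  then have "\<bar>cos (x/2)\<bar> < 1"
    by (simp add: abs_square_less_1)
  have "\<bar>sin x\<bar> = 2 * \<bar>sin (x/2)\<bar> * \<bar>cos (x/2)\<bar>"
    using sin_double[of "x/2"] by (simp add: abs_mult)
  also have "\<dots> < 2 * \<bar>sin (x/2)\<bar>"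
    using False \<open>\<bar>cos (x/2)\<bar> < 1\<close> by (simp add: mult_less_cancel_left1)
  also have "\<dots> \<le> \<bar>x\<bar>"
    using abs_sin_x_le_abs_x[of "x/2"] by simp
  finally show ?thesis .
qed

lemma one_minus_cos_eq: "1 - cos x = 2 * (sin (x/2))\<^sup>2"
  for x :: real
  using cos_double_sin[of "x/2"] by simp

lemma one_minus_cos_le: "1 - cos x \<le> x\<^sup>2 / 2"
  for x :: real
proof -
  have "(sin (x/2))\<^sup>2 \<le> (x/2)\<^sup>2"
    using abs_sin_x_le_abs_x[of "x/2"] abs_le_square_iff by blast
  then show ?thesis unfolding one_minus_cos_eq by (simp add: power_divide)
qed

lemma one_minus_cos_less: "x \<noteq> 0 \<Longrightarrow> 1 - cos x < x\<^sup>2 / 2"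
  for x :: real
  using abs_sin_less_abs[of "x/2"] abs_le_square_iff[of "x/2" "sin (x/2)"]
  unfolding one_minus_cos_eq by (simp add: power_divide)

lemma norm_vec3_sq: "(norm w)\<^sup>2 = (w$1)\<^sup>2 + (w$2)\<^sup>2 + (w$3)\<^sup>2"
  for w :: "real^3"
  by (simp only: power2_norm_eq_inner) (simp add: inner_vec_def sum_3 power2_eq_square)

lemma Rx_Ry_minus_id_apply:
  "(Rx a ** Ry b - mat 1) *v v = vector [
     (cos b - 1) * v$1 - sin b * v$3,
     - sin a * sin b * v$1 + (cos a - 1) * v$2 - sin a * cos b * v$3,
     cos a * sin b * v$1 + sin a * v$2 + (cos a * cos b - 1) * v$3]"
  unfolding vec_eq_iff forall_3
  by (simp add: Rx_def Ry_def matrix_vector_mult_def matrix_matrix_mult_def sum_3 mat_def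
      algebra_simps)

lemma norm_Rx_Ry_minus_id_apply_sq:
  "(norm ((Rx a ** Ry b - mat 1) *v v))\<^sup>2
     = (3 - cos a - cos b - cos a * cos b) * (norm v)\<^sup>2
       - (2 * (sin (a/2) * cos (b/2) * v$1 - cos (a/2) * sin (b/2) * v$2
               - sin (a/2) * sin (b/2) * v$3))\<^sup>2"
proof -
  have half_angle:
    "cos a = 1 - 2 * (sin (a/2))\<^sup>2" "sin a = 2 * sin (a/2) * cos (a/2)"
    "cos b = 1 - 2 * (sin (b/2))\<^sup>2" "sin b = 2 * sin (b/2) * cos (b/2)"
    using cos_double_sin[of "a/2"] sin_double[of "a/2"] cos_double_sin[of "b/2"] sin_double[of "b/2"]
    by simp_all
  show ?thesis
    using sin_cos_squared_add[of "a/2"] sin_cos_squared_add[of "b/2"]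
    unfolding Rx_Ry_minus_id_apply norm_vec3_sq vector_3 half_angle
    by algebra
qed

lemma norm_Rx_Ry_minus_id_apply_le:
  "norm ((Rx a ** Ry b - mat 1) *v v) \<le> sqrt (3 - cos a - cos b - cos a * cos b) * norm v"
proof -
  have "norm ((Rx a ** Ry b - mat 1) *v v) = sqrt ((norm ((Rx a ** Ry b - mat 1) *v v))\<^sup>2)"
    by simp
  also have "\<dots> \<le> sqrt ((3 - cos a - cos b - cos a * cos b) * (norm v)\<^sup>2)"
    unfolding norm_Rx_Ry_minus_id_apply_sq by simp
  also have "\<dots> = sqrt (3 - cos a - cos b - cos a * cos b) * norm v"
    by (simp add: real_sqrt_mult)
  finally show ?thesis .
qed

lemma opnorm_Rx_Ry_minus_id_le:
  "opnorm (Rx a ** Ry b - mat 1) \<le> sqrt (3 - cos a - cos b - cos a * cos b)"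
  unfolding opnorm_def by (rule onorm_le) (rule norm_Rx_Ry_minus_id_apply_le)

lemma trace_defect_le: "3 - cos a - cos b - cos a * cos b \<le> 2 * (1 - cos a) + 2 * (1 - cos b)"
  for a b :: real
  using mult_nonneg_nonneg[of "1 - cos a" "1 - cos b"] cos_le_one[of a] cos_le_one[of b]
  by (simp add: algebra_simps)

theorem lemma3p4:
  fixes \<alpha> \<beta> :: real
  shows "opnorm (Rx \<alpha> ** Ry \<beta> - mat 1) \<le> sqrt (\<alpha>\<^sup>2 + \<beta>\<^sup>2)
       \<and> (opnorm (Rx \<alpha> ** Ry \<beta> - mat 1) = sqrt (\<alpha>\<^sup>2 + \<beta>\<^sup>2) \<longrightarrow> \<alpha> = 0 \<and> \<beta> = 0)"
proof -
  let ?K = "3 - cos \<alpha> - cos \<beta> - cos \<alpha> * cos \<beta>"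
  have K_le: "?K \<le> \<alpha>\<^sup>2 + \<beta>\<^sup>2"
    using trace_defect_le[of \<alpha> \<beta>] one_minus_cos_le[of \<alpha>] one_minus_cos_le[of \<beta>] by argo
  have K_less: "?K < \<alpha>\<^sup>2 + \<beta>\<^sup>2" if "\<alpha> \<noteq> 0 \<or> \<beta> \<noteq> 0"
    using that trace_defect_le[of \<alpha> \<beta>] one_minus_cos_le[of \<alpha>] one_minus_cos_le[of \<beta>]
      one_minus_cos_less[of \<alpha>] one_minus_cos_less[of \<beta>]
    by (cases "\<alpha> = 0") argo+
  have "opnorm (Rx \<alpha> ** Ry \<beta> - mat 1) \<le> sqrt ?K"
    by (rule opnorm_Rx_Ry_minus_id_le)
  then show ?thesis
    using real_sqrt_le_mono[OF K_le] real_sqrt_less_mono[OF K_less] by argo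
qed

end
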